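(* Let $m\ge 38$ be even and let $G$ be a graph with maximum spectral radius among all $H(4,3)$-free graphs with $m$ edges and no isolated vertices. Let $\mathbf{x}$ be the Perron vector of $G$, $u^*$ a vertex maximizing $x_{u^*}$, $N = N(u^* )$, $A_+ = \{v\in N : d_N(v)\ge 1\}$ and $W = V(G)\setminus N[u^*]$. If $G[A_+]\cong K_{1,t}$ for some $t\ge 1$, then $W=\emptyset$.
   Context: All graphs are simple and undirected; $\rho(G)$ is the largest adjacency eigenvalue and the Perron vector is the positive unit eigenvector for $\rho(G)$ (the extremal $G$ is connected). $H(4,3)$ is the graph formed by a cycle of length $4$ and a triangle sharing exactly one common vertex. $N(v)$ denotes the neighbourhood of $v$, $N[v]=N(v)\cup\{v\}$, $d_S(v)=|N(v)\cap S|$, and $G[S]$ is the subgraph induced by $S$. *)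

theory Defs
  imports Complex_Main
begin

definition graph :: "'a set \<Rightarrow> ('a \<Rightarrow> 'a \<Rightarrow> bool) \<Rightarrow> bool" where
  "graph V E \<longleftrightarrow> finite V \<and> (\<forall>u v. E u v \<longrightarrow> u \<in> V \<and> v \<in> V)
     \<and> (\<forall>u v. E u v \<longrightarrow> E v u) \<and> (\<forall>u. \<not> E u u)"

definition edges :: "'a set \<Rightarrow> ('a \<Rightarrow> 'a \<Rightarrow> bool) \<Rightarrow> 'a set set" where
  "edges V E = {{u, v} | u v. u \<in> V \<and> v \<in> V \<and> E u v}"

definition no_isolated :: "'a set \<Rightarrow> ('a \<Rightarrow> 'a \<Rightarrow> bool) \<Rightarrow> bool" where
  "no_isolated V E \<longleftrightarrow> (\<forall>v\<in>V. \<exists>w\<in>V. E v w)"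

definition H43_free :: "'a set \<Rightarrow> ('a \<Rightarrow> 'a \<Rightarrow> bool) \<Rightarrow> bool" where
  "H43_free V E \<longleftrightarrow> \<not> (\<exists>a b c d e f.
     distinct [a, b, c, d, e, f] \<and> {a, b, c, d, e, f} \<subseteq> V \<and>
     E a b \<and> E b c \<and> E c d \<and> E d a \<and> E a e \<and> E e f \<and> E f a)"

definition adj_eigenvalue :: "'a set \<Rightarrow> ('a \<Rightarrow> 'a \<Rightarrow> bool) \<Rightarrow> real \<Rightarrow> bool" where
  "adj_eigenvalue V E lam \<longleftrightarrow> (\<exists>x :: 'a \<Rightarrow> real. (\<exists>v\<in>V. x v \<noteq> 0) \<and>
     (\<forall>v\<in>V. (\<Sum>w\<in>{w\<in>V. E v w}. x w) = lam * x v))"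

text \<open>Spectral radius: largest adjacency eigenvalue (the adjacency matrix is
  real symmetric, so all eigenvalues are real).\<close>
definition spectral_radius :: "'a set \<Rightarrow> ('a \<Rightarrow> 'a \<Rightarrow> bool) \<Rightarrow> real" where
  "spectral_radius V E = Max {lam. adj_eigenvalue V E lam}"

definition perron_vector :: "'a set \<Rightarrow> ('a \<Rightarrow> 'a \<Rightarrow> bool) \<Rightarrow> ('a \<Rightarrow> real) \<Rightarrow> bool" where
  "perron_vector V E x \<longleftrightarrow> (\<forall>v\<in>V. x v > 0) \<and> (\<Sum>v\<in>V. (x v)\<^sup>2) = 1 \<and>
     (\<forall>v\<in>V. (\<Sum>w\<in>{w\<in>V. E v w}. x w) = spectral_radius V E * x v)"

definition nbhd :: "'a set \<Rightarrow> ('a \<Rightarrow> 'a \<Rightarrow> bool) \<Rightarrow> 'a \<Rightarrow> 'a set" where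
  "nbhd V E v = {w\<in>V. E v w}"

definition induced_star :: "('a \<Rightarrow> 'a \<Rightarrow> bool) \<Rightarrow> 'a set \<Rightarrow> nat \<Rightarrow> bool" where
  "induced_star E S t \<longleftrightarrow> (\<exists>f. bij_betw f {0..t} S \<and>
     (\<forall>i\<in>{0..t}. \<forall>j\<in>{0..t}. E (f i) (f j) \<longleftrightarrow> ((i = 0 \<and> j \<noteq> 0) \<or> (j = 0 \<and> i \<noteq> 0))))"

definition admissible :: "nat \<Rightarrow> 'a set \<Rightarrow> ('a \<Rightarrow> 'a \<Rightarrow> bool) \<Rightarrow> bool" where
  "admissible m V E \<longleftrightarrow> graph V E \<and> H43_free V E \<and> card (edges V E) = m \<and> no_isolated V E"

text \<open>G is extremal: admissible and of maximum spectral radius among all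
  admissible graphs (competitors on finite subsets of nat, which covers every
  finite graph up to isomorphism).\<close>
definition extremal :: "nat \<Rightarrow> 'a set \<Rightarrow> ('a \<Rightarrow> 'a \<Rightarrow> bool) \<Rightarrow> bool" where
  "extremal m V E \<longleftrightarrow> admissible m V E \<and>
     (\<forall>(V' :: nat set) E'. admissible m V' E' \<longrightarrow> spectral_radius V' E' \<le> spectral_radius V E)"

end

theory Submission
  imports Defs "Jordan_Normal_Form.Char_Poly"
begin

(* The book with k pages plus a pendant edge at a spine vertex has m = 2k + 2 edges, is
   H(4,3)-free because every edge meets the spine, and its spectral radius l satisfies
   l^2 - l >= m - 7/4; by extremality so does rho = rho(G).  For the Perron vector,
     rho^2 x_u = |N| x_u + sum_{z in N} d_N(z) x_z + sum_{z in W} d_N(z) x_z.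
   If A_+ spans a star K_{1,t}, then G[N] has t edges and a single vertex of N-degree
   above one, so the first sum is at most (rho + t - 1) x_u, while counting the edges at u,
   inside N and between N and W gives |N| + t + e(N, W) <= m.  A vertex y in W either has a
   neighbour in W, which costs one more edge and forces rho^2 <= m - 2 + rho, or has all of
   its k neighbours in N; then k <= 3, since two further common neighbours of u and y would
   close an H(4,3) with a triangle u c l of the star, and rho x_y <= k x_u leads to
   rho (k - 3/4) <= k^2, impossible for rho >= 6. *)

section \<open>Spectral radius\<close>

definition adjacency_mat :: "(nat \<Rightarrow> 'a) \<Rightarrow> nat \<Rightarrow> ('a \<Rightarrow> 'a \<Rightarrow> bool) \<Rightarrow> real mat" where
  "adjacency_mat g n E = mat n n (\<lambda>(i, j). if E (g i) (g j) then 1 else 0)"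

lemma adjacency_mat_mult_vec:
  assumes g: "bij_betw g {0..<n} V" and "i < n"
  shows "(adjacency_mat g n E *\<^sub>v vec n (x \<circ> g)) $ i = (\<Sum>w\<in>nbhd V E (g i). x w)"
proof -
  have "finite V" using bij_betw_finite g by blast
  have "(adjacency_mat g n E *\<^sub>v vec n (x \<circ> g)) $ i
      = (\<Sum>j\<in>{0..<n}. (if E (g i) (g j) then 1 else 0) * x (g j))"
    using assms(2) by (simp add: adjacency_mat_def mult_mat_vec_def scalar_prod_def row_def)
  also have "\<dots> = (\<Sum>j\<in>{0..<n}. if E (g i) (g j) then x (g j) else 0)"
    by (rule sum.cong) auto
  also have "\<dots> = (\<Sum>w\<in>V. if E (g i) w then x w else 0)"
    by (rule sum.reindex_bij_betw[OF g])
  also have "\<dots> = (\<Sum>w\<in>nbhd V E (g i). x w)"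
    unfolding nbhd_def by (rule sum.inter_filter[OF \<open>finite V\<close>, symmetric])
  finally show ?thesis .
qed

lemma eigenvalue_adjacency_mat:
  assumes g: "bij_betw g {0..<n} V" and "adj_eigenvalue V E lam"
  shows "eigenvalue (adjacency_mat g n E) lam"
proof -
  obtain x where x0: "\<exists>v\<in>V. x v \<noteq> 0"
    and x: "\<forall>v\<in>V. (\<Sum>w\<in>nbhd V E v. x w) = lam * x v"
    using assms(2) unfolding adj_eigenvalue_def nbhd_def by blast
  define y where "y = vec n (x \<circ> g)"
  have V: "V = g ` {0..<n}" using g by (simp add: bij_betw_def)
  have "(adjacency_mat g n E *\<^sub>v y) $ i = (lam \<cdot>\<^sub>v y) $ i" if "i < n" for i
    using adjacency_mat_mult_vec[OF g that] x V that by (simp add: y_def)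
  then have "adjacency_mat g n E *\<^sub>v y = lam \<cdot>\<^sub>v y"
    by (intro eq_vecI) (simp_all add: adjacency_mat_def y_def)
  moreover have "y \<noteq> 0\<^sub>v n"
  proof
    assume "y = 0\<^sub>v n"
    then have "x (g j) = 0" if "j < n" for j
      using that by (metis comp_apply index_vec index_zero_vec(1) y_def)
    then show False using x0 V by auto
  qed
  moreover have "y \<in> carrier_vec n" by (simp add: y_def)
  moreover have "dim_row (adjacency_mat g n E) = n" by (simp add: adjacency_mat_def)
  ultimately show ?thesis unfolding eigenvalue_def eigenvector_def by (intro exI[of _ y]) simp
qed

lemma finite_adj_eigenvalues:
  assumes "finite V"
  shows "finite {lam. adj_eigenvalue V E lam}"
proof -
  obtain g where g: "bij_betw g {0..<card V} V"
    using ex_bij_betw_nat_finite[OF assms] by blast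
  define A where "A = adjacency_mat g (card V) E"
  have A: "A \<in> carrier_mat (card V) (card V)" by (simp add: A_def adjacency_mat_def)
  have "{lam. adj_eigenvalue V E lam} \<subseteq> {lam. poly (char_poly A) lam = 0}"
    using eigenvalue_adjacency_mat[OF g] eigenvalue_root_char_poly[OF A] unfolding A_def by blast
  moreover have "char_poly A \<noteq> 0" using degree_monic_char_poly[OF A] by auto
  ultimately show ?thesis using poly_roots_finite finite_subset by blast
qed

lemma adj_eigenvalue_le_spectral_radius:
  assumes "finite V" and "adj_eigenvalue V E lam"
  shows "lam \<le> spectral_radius V E"
  unfolding spectral_radius_def using finite_adj_eigenvalues[OF assms(1)] assms(2)
  by (intro Max_ge) auto

lemma edge_in_edges: "graph V E \<Longrightarrow> E u v \<Longrightarrow> {u, v} \<in> edges V E"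
  unfolding graph_def edges_def by blast

lemma edges_mono: "S \<subseteq> V \<Longrightarrow> edges S E \<subseteq> edges V E"
  unfolding edges_def by blast

lemma edges_subset_Pow: "edges S E \<subseteq> Pow S"
  unfolding edges_def by blast

lemma finite_edges: "finite S \<Longrightarrow> finite (edges S E)"
  using finite_subset[OF edges_subset_Pow] by simp

section \<open>The competitor graph\<close>

lemma H43_free_if_edges_meet_pair:
  assumes cover: "\<And>a b. E a b \<Longrightarrow> a \<in> {p, q} \<or> b \<in> {p, q}"
  shows "H43_free V E"
  unfolding H43_free_def
proof (intro notI, elim exE conjE)
  fix a b c d e f
  assume "distinct [a, b, c, d, e, f]"
    and "E a b" "E b c" "E c d" "E d a" "E a e" "E e f" "E f a"
  then show False
    using cover[of a b] cover[of b c] cover[of c d] cover[of d a]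
      cover[of a e] cover[of e f] cover[of f a]
    by auto
qed

text \<open>The book with k pages on the spine 0--1 (pages 2, ..., k+1), with a pendant
  vertex k+2 attached to the spine vertex 0.\<close>
definition book_pendant :: "nat \<Rightarrow> nat \<Rightarrow> nat \<Rightarrow> bool" where
  "book_pendant k i j \<longleftrightarrow> i < k + 3 \<and> j < k + 3 \<and> i \<noteq> j \<and>
     (i = 0 \<or> j = 0 \<or> (i = 1 \<and> 2 \<le> j \<and> j \<le> k + 1) \<or> (j = 1 \<and> 2 \<le> i \<and> i \<le> k + 1))"

lemma graph_book_pendant: "graph {0..<k+3} (book_pendant k)"
  unfolding graph_def book_pendant_def by auto

lemma no_isolated_book_pendant: "no_isolated {0..<k+3} (book_pendant k)"
  unfolding no_isolated_def
proof
  fix v assume "v \<in> {0..<k+3}"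
  then show "\<exists>w\<in>{0..<k+3}. book_pendant k v w"
    by (cases "v = 0") (auto simp: book_pendant_def intro: bexI[of _ 0] bexI[of _ 1])
qed

lemma H43_free_book_pendant: "H43_free V (book_pendant k)"
  by (rule H43_free_if_edges_meet_pair[of _ 0 1]) (auto simp: book_pendant_def)

lemma nbhd_book_pendant:
  "nbhd {0..<k+3} (book_pendant k) 0 = {1..k+2}"
  "nbhd {0..<k+3} (book_pendant k) 1 = insert 0 {2..k+1}"
  "i \<in> {2..k+1} \<Longrightarrow> nbhd {0..<k+3} (book_pendant k) i = {0, 1}"
  "nbhd {0..<k+3} (book_pendant k) (k+2) = {0}"
  unfolding nbhd_def book_pendant_def by auto

lemma edges_book_pendant:
  "edges {0..<k+3} (book_pendant k) = (\<lambda>j. {0, j}) ` {1..k+2} \<union> (\<lambda>j. {1, j}) ` {2..k+1}"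
proof (intro equalityI subsetI)
  fix e assume "e \<in> edges {0..<k+3} (book_pendant k)"
  then obtain i j where e: "e = {i, j}" and ij: "book_pendant k i j"
    unfolding edges_def by blast
  from ij consider "i = 0" "j \<in> {1..k+2}" | "j = 0" "i \<in> {1..k+2}"
    | "i = 1" "j \<in> {2..k+1}" | "j = 1" "i \<in> {2..k+1}"
    unfolding book_pendant_def by fastforce
  then show "e \<in> (\<lambda>j. {0, j}) ` {1..k+2} \<union> (\<lambda>j. {1, j}) ` {2..k+1}"
    by cases (auto simp: e insert_commute)
next
  fix e assume "e \<in> (\<lambda>j. {0, j}) ` {1..k+2} \<union> (\<lambda>j. {1::nat, j}) ` {2..k+1}"
  then consider j where "j \<in> {1..k+2}" "e = {0, j}" | j where "j \<in> {2..k+1}" "e = {1, j}"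
    by blast
  then show "e \<in> edges {0..<k+3} (book_pendant k)"
    by cases (auto intro!: edge_in_edges[OF graph_book_pendant] simp: book_pendant_def)
qed

lemma card_edges_book_pendant: "card (edges {0..<k+3} (book_pendant k)) = 2 * k + 2"
proof -
  have "inj_on (\<lambda>j. {0::nat, j}) {1..k+2}"
    unfolding inj_on_def by (metis insert_absorb2 doubleton_eq_iff)
  moreover have "inj_on (\<lambda>j. {1::nat, j}) {2..k+1}"
    unfolding inj_on_def by (metis doubleton_eq_iff)
  moreover have "(\<lambda>j. {0::nat, j}) ` {1..k+2} \<inter> (\<lambda>j. {1, j}) ` {2..k+1} = {}"
    using image_iff[of _ "\<lambda>j. {1::nat, j}"] by fastforce
  ultimately show ?thesis
    unfolding edges_book_pendant by (simp add: card_Un_disjoint card_image)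
qed

text \<open>The quartic is what remains of the eigen-equations of adj_eigenvalue_book_pendant
  after eliminating b, q and z.\<close>
lemma book_pendant_char_root:
  fixes k :: real
  assumes k: "2 \<le> k"
  obtains l where "(l\<^sup>2 - k - 1) * (l\<^sup>2 - k) = (l + k)\<^sup>2" and "2 * k + 1/4 \<le> l\<^sup>2 - l"
    and "0 < l"
proof -
  define p where "p = (\<lambda>l::real. (l\<^sup>2 - k - 1) * (l\<^sup>2 - k) - (l + k)\<^sup>2)"
  define s where "s = sqrt (8 * k + 2)"
  have s2: "s\<^sup>2 = 8 * k + 2" and s0: "0 \<le> s"
    using k by (simp_all add: s_def)
  define l0 where "l0 = (1 + s) / 2"
  have l0: "l0\<^sup>2 = l0 + 2 * k + 1/4" and l0_pos: "1/2 \<le> l0"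
    using s2 s0 by (simp_all add: l0_def power2_eq_square field_simps)
  have "p l0 = (l0 + k - 3/4) * (l0 + k + 1/4) - (l0 + k)\<^sup>2"
    unfolding p_def l0 by (simp add: algebra_simps)
  also have "\<dots> = - (l0 + k) / 2 - 3/16"
    by (simp add: power2_eq_square field_simps)
  finally have "p l0 \<le> 0" using l0_pos k by simp
  have kk: "2 * k \<le> k * k" using mult_right_mono[of 2 k k] k by linarith
  have "s \<le> 2 * k + 1"
  proof (rule power2_le_imp_le)
    have "(2 * k + 1)\<^sup>2 = 4 * (k * k) + 4 * k + 1" by (simp add: power2_eq_square algebra_simps)
    then show "s\<^sup>2 \<le> (2 * k + 1)\<^sup>2" using s2 kk k by linarith
  qed (use k in simp)
  then have "l0 \<le> k + 1" by (simp add: l0_def)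
  have "(3 * k) * (3 * k) \<le> (k * k + k) * (k * k + k + 1)"
    by (rule mult_mono) (use k kk in linarith)+
  moreover have "(2 * k + 1) * (2 * k + 1) \<le> (3 * k) * (3 * k)"
  proof -
    have "(3 * k) * (3 * k) = 9 * (k * k)" "(2 * k + 1) * (2 * k + 1) = 4 * (k * k) + 4 * k + 1"
      by (simp_all add: algebra_simps)
    then show ?thesis using kk k by linarith
  qed
  moreover have "p (k + 1) = (k * k + k) * (k * k + k + 1) - (2 * k + 1) * (2 * k + 1)"
    by (simp add: p_def power2_eq_square algebra_simps)
  ultimately have "0 \<le> p (k + 1)" by simp
  have "continuous_on {l0..k+1} p" unfolding p_def by (intro continuous_intros)
  then obtain l where l: "l0 \<le> l" "p l = 0"
    using IVT'[of p l0 0 "k + 1"] \<open>p l0 \<le> 0\<close> \<open>0 \<le> p (k + 1)\<close> \<open>l0 \<le> k + 1\<close> by blast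
  have "0 \<le> (l - l0) * (l + l0 - 1)" using l(1) l0_pos by (intro mult_nonneg_nonneg) auto
  then have "2 * k + 1/4 \<le> l\<^sup>2 - l" using l0 by (simp add: power2_eq_square algebra_simps)
  with l l0_pos show thesis by (intro that) (auto simp: p_def)
qed

lemma book_pendant_weights:
  fixes k l :: real
  assumes l_pos: "0 < l" and "k < l\<^sup>2" and quartic: "(l\<^sup>2 - k - 1) * (l\<^sup>2 - k) = (l + k)\<^sup>2"
  obtains b q z where "l * z = 1" and "l * q = 1 + b" and "1 + k * q = l * b"
    and "b + k * q + z = l"
proof -
  define b where "b = (l + k) / (l\<^sup>2 - k)"
  define q where "q = (1 + b) / l"
  define z where "z = 1 / l"
  have b: "b * (l\<^sup>2 - k) = l + k" using \<open>k < l\<^sup>2\<close> by (simp add: b_def)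
  have "(b * (l + k)) * (l\<^sup>2 - k) = (l\<^sup>2 - k - 1) * (l\<^sup>2 - k)"
  proof -
    have "(b * (l + k)) * (l\<^sup>2 - k) = (l + k) * (l + k)" using b by (simp add: mult_ac)
    then show ?thesis using quartic by (simp add: power2_eq_square)
  qed
  then have b_eq: "b * (l + k) = l\<^sup>2 - k - 1" using \<open>k < l\<^sup>2\<close> by simp
  have q: "l * q = 1 + b" and z: "l * z = 1" using l_pos by (simp_all add: q_def z_def)
  have "b + k * q + z = l"
  proof -
    have "l * (b + k * q + z) = l * b + k * (l * q) + l * z" by (simp add: algebra_simps)
    also have "\<dots> = b * (l + k) + k + 1" using q z by (simp add: algebra_simps)
    also have "\<dots> = l * l" using b_eq by (simp add: power2_eq_square)
    finally show ?thesis using l_pos by simp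
  qed
  moreover have "1 + k * q = l * b"
  proof -
    have "l * (1 + k * q) = l + k * (l * q)" by (simp add: algebra_simps)
    also have "\<dots> = l + k + k * b" using q by (simp add: algebra_simps)
    also have "\<dots> = l * (l * b)" using b by (simp add: power2_eq_square algebra_simps)
    finally show ?thesis using l_pos by simp
  qed
  ultimately show thesis using q z that by blast
qed

lemma adj_eigenvalue_book_pendant:
  assumes z: "l * z = 1" and q: "l * q = 1 + b" and b: "1 + real k * q = l * b"
    and one: "b + real k * q + z = l"
  shows "adj_eigenvalue {0..<k+3} (book_pendant k) l"
proof -
  define y where "y = (\<lambda>j::nat. if j = 0 then 1 else if j = 1 then b else if j = k + 2 then z else q)"
  have y: "y 0 = 1" "y 1 = b" "y (k + 2) = z" "\<And>j. j \<in> {2..k+1} \<Longrightarrow> y j = q"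
    by (auto simp: y_def)
  have pages: "(\<Sum>w\<in>{2..k+1}. y w) = real k * q"
    using y(4) by simp
  have "(\<Sum>w\<in>nbhd {0..<k+3} (book_pendant k) v. y w) = l * y v" if v: "v \<in> {0..<k+3}" for v
  proof -
    consider "v = 0" | "v = 1" | "v \<in> {2..k+1}" | "v = k + 2" using v by fastforce
    then show ?thesis
    proof cases
      case 1
      have "{1..k+2} = insert 1 (insert (k + 2) {2..k+1})" by auto
      then have "(\<Sum>w\<in>{1..k+2}. y w) = y 1 + (y (k + 2) + (\<Sum>w\<in>{2..k+1}. y w))" by simp
      then show ?thesis unfolding 1 nbhd_book_pendant(1) using one pages y by simp
    next
      case 2
      have "(\<Sum>w\<in>insert 0 {2..k+1}. y w) = y 0 + (\<Sum>w\<in>{2..k+1}. y w)" by simp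
      then show ?thesis unfolding 2 nbhd_book_pendant(2) using b pages y by simp
    next
      case 3
      then show ?thesis using q y by (simp add: nbhd_book_pendant)
    next
      case 4
      then show ?thesis unfolding 4 nbhd_book_pendant(4) using z y by simp
    qed
  qed
  then show ?thesis
    unfolding adj_eigenvalue_def nbhd_def by (intro exI[of _ y]) (auto simp: y_def)
qed

lemma book_pendant_eigenvalue:
  assumes "2 \<le> k"
  obtains l where "adj_eigenvalue {0..<k+3} (book_pendant k) l"
    and "2 * real k + 1/4 \<le> l\<^sup>2 - l" and "0 < l"
proof -
  obtain l where quartic: "(l\<^sup>2 - real k - 1) * (l\<^sup>2 - real k) = (l + real k)\<^sup>2"
    and l_bound: "2 * real k + 1/4 \<le> l\<^sup>2 - l" and l_pos: "0 < l"
    using book_pendant_char_root[of "real k"] assms by auto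
  have "real k < l\<^sup>2" using l_bound l_pos by linarith
  then obtain b q z where "l * z = 1" "l * q = 1 + b" "1 + real k * q = l * b" "b + real k * q + z = l"
    using book_pendant_weights[OF l_pos _ quartic] by blast
  then have "adj_eigenvalue {0..<k+3} (book_pendant k) l"
    by (rule adj_eigenvalue_book_pendant)
  then show thesis using l_bound l_pos by (rule that)
qed

lemma extremal_spectral_radius_lower_bound:
  assumes "extremal m V E" and "even m" and "38 \<le> m"
  shows "real m - 7/4 \<le> (spectral_radius V E)\<^sup>2 - spectral_radius V E"
    and "6 \<le> spectral_radius V E"
proof -
  define k where "k = (m - 2) div 2"
  have m: "m = 2 * k + 2" and "2 \<le> k" and "18 \<le> real k"
    using assms(2,3) unfolding k_def by (auto elim!: evenE)
  obtain l where l: "adj_eigenvalue {0..<k+3} (book_pendant k) l"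
    and l_bound: "2 * real k + 1/4 \<le> l\<^sup>2 - l" and "0 < l"
    using book_pendant_eigenvalue[OF \<open>2 \<le> k\<close>] by blast
  have "admissible m {0..<k+3} (book_pendant k)"
    unfolding admissible_def m using graph_book_pendant H43_free_book_pendant
      card_edges_book_pendant no_isolated_book_pendant by blast
  then have "l \<le> spectral_radius V E"
    using adj_eigenvalue_le_spectral_radius[OF _ l] assms(1) unfolding extremal_def by fastforce
  moreover have "6 \<le> l"
  proof (rule ccontr)
    assume "\<not> 6 \<le> l"
    then have "l * l \<le> 6 * l" using \<open>0 < l\<close> by (intro mult_right_mono) auto
    then show False using l_bound \<open>\<not> 6 \<le> l\<close> \<open>18 \<le> real k\<close> by (simp add: power2_eq_square)
  qed
  ultimately have "0 \<le> (spectral_radius V E - l) * (spectral_radius V E + l - 1)"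
    by (intro mult_nonneg_nonneg) auto
  then have "l\<^sup>2 - l \<le> (spectral_radius V E)\<^sup>2 - spectral_radius V E"
    by (simp add: power2_eq_square algebra_simps)
  moreover have "real m = 2 * real k + 2" using m by simp
  ultimately show "real m - 7/4 \<le> (spectral_radius V E)\<^sup>2 - spectral_radius V E"
    using l_bound by linarith
  show "6 \<le> spectral_radius V E"
    using \<open>l \<le> spectral_radius V E\<close> \<open>6 \<le> l\<close> by linarith
qed

section \<open>Local structure around u\<close>

lemma sum_nbhd_swap:
  fixes g :: "'a \<Rightarrow> real"
  assumes "finite A" and "finite B" and sym: "\<And>a b. E a b \<Longrightarrow> E b a"
  shows "(\<Sum>v\<in>A. \<Sum>z\<in>nbhd B E v. g z) = (\<Sum>z\<in>B. real (card (nbhd A E z)) * g z)"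
proof -
  have "(\<Sum>v\<in>A. \<Sum>z\<in>nbhd B E v. g z) = (\<Sum>v\<in>A. \<Sum>z\<in>B. if E v z then g z else 0)"
    unfolding nbhd_def using assms(2) by (simp add: sum.inter_filter)
  also have "\<dots> = (\<Sum>z\<in>B. \<Sum>v\<in>A. if E v z then g z else 0)"
    by (rule sum.swap)
  also have "\<dots> = (\<Sum>z\<in>B. real (card (nbhd A E z)) * g z)"
  proof (rule sum.cong[OF refl])
    fix z
    have "nbhd A E z = {v\<in>A. E v z}" unfolding nbhd_def using sym by blast
    then show "(\<Sum>v\<in>A. if E v z then g z else 0) = real (card (nbhd A E z)) * g z"
      using sum.inter_filter[OF assms(1), of "\<lambda>_. g z" "\<lambda>v. E v z"] by simp
  qed
  finally show ?thesis .
qed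

lemma eigenvector_two_step_identity:
  assumes "graph V E" and "u \<in> V"
    and eig: "\<And>v. v \<in> V \<Longrightarrow> (\<Sum>w\<in>nbhd V E v. x w) = r * x v"
  defines "N \<equiv> nbhd V E u" and "W \<equiv> V - insert u (nbhd V E u)"
  shows "r * r * x u = real (card N) * x u + (\<Sum>z\<in>N. real (card (nbhd N E z)) * x z)
           + (\<Sum>z\<in>W. real (card (nbhd N E z)) * x z)"
proof -
  have fin: "finite N" "finite W" and sym: "\<And>a b. E a b \<Longrightarrow> E b a"
    and "u \<notin> N" "N \<subseteq> V" "N \<inter> W = {}" "u \<notin> W"
    using assms(1) unfolding graph_def N_def W_def nbhd_def by auto
  have step: "r * x v = x u + (\<Sum>z\<in>nbhd N E v. x z) + (\<Sum>z\<in>nbhd W E v. x z)" if v: "v \<in> N" for v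
  proof -
    have "nbhd V E v = insert u (nbhd N E v \<union> nbhd W E v)"
      using v sym assms(2) unfolding nbhd_def N_def W_def by auto
    moreover have "nbhd N E v \<inter> nbhd W E v = {}" "u \<notin> nbhd N E v \<union> nbhd W E v"
      using \<open>N \<inter> W = {}\<close> \<open>u \<notin> N\<close> \<open>u \<notin> W\<close> unfolding nbhd_def by auto
    moreover have "finite (nbhd N E v)" "finite (nbhd W E v)"
      using fin unfolding nbhd_def by auto
    ultimately show ?thesis
      using eig[of v] v \<open>N \<subseteq> V\<close> by (auto simp: sum.union_disjoint)
  qed
  have "r * r * x u = r * (\<Sum>v\<in>N. x v)"
    using eig[OF assms(2)] by (simp add: N_def)
  also have "\<dots> = (\<Sum>v\<in>N. r * x v)"
    by (simp add: sum_distrib_left)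
  also have "\<dots> = real (card N) * x u + (\<Sum>v\<in>N. \<Sum>z\<in>nbhd N E v. x z)
      + (\<Sum>v\<in>N. \<Sum>z\<in>nbhd W E v. x z)"
    using step by (simp add: sum.distrib)
  finally show ?thesis
    using sum_nbhd_swap[OF fin(1) fin(1) sym] sum_nbhd_swap[OF fin(1) fin(2) sym] by simp
qed

lemma card_cross_edges:
  assumes "finite N" and "finite W" and "N \<inter> W = {}"
  shows "card (\<Union>z\<in>W. (\<lambda>v. {v, z}) ` nbhd N E z) = (\<Sum>z\<in>W. card (nbhd N E z))"
proof (subst card_UN_disjoint)
  show "finite W" by (fact assms(2))
  show "\<forall>z\<in>W. finite ((\<lambda>v. {v, z}) ` nbhd N E z)"
    using assms(1) by (simp add: nbhd_def)
  show "\<forall>z\<in>W. \<forall>z'\<in>W. z \<noteq> z' \<longrightarrow> (\<lambda>v. {v, z}) ` nbhd N E z \<inter> (\<lambda>v. {v, z'}) ` nbhd N E z' = {}"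
    using assms(3) by (auto simp: nbhd_def doubleton_eq_iff)
  show "(\<Sum>z\<in>W. card ((\<lambda>v. {v, z}) ` nbhd N E z)) = (\<Sum>z\<in>W. card (nbhd N E z))"
    by (intro sum.cong refl card_image) (auto simp: inj_on_def doubleton_eq_iff)
qed

lemma card_edges_local_lower_bound:
  assumes "graph V E" and "u \<in> V"
  defines "N \<equiv> nbhd V E u" and "W \<equiv> V - insert u (nbhd V E u)"
  shows "card N + card (edges N E) + (\<Sum>z\<in>W. card (nbhd N E z)) + card (edges W E)
           \<le> card (edges V E)"
proof -
  define at_u where "at_u = (\<lambda>v. {u, v}) ` N"
  define cross where "cross = (\<Union>z\<in>W. (\<lambda>v. {v, z}) ` nbhd N E z)"
  have fin: "finite V" "finite N" "finite W" and sym: "\<And>a b. E a b \<Longrightarrow> E b a"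
    and "u \<notin> N" "u \<notin> W" "N \<subseteq> V" "W \<subseteq> V" "N \<inter> W = {}"
    using assms(1,2) unfolding graph_def N_def W_def nbhd_def by auto
  have "card at_u = card N"
    unfolding at_u_def by (rule card_image) (auto simp: inj_on_def doubleton_eq_iff)
  moreover have "card cross = (\<Sum>z\<in>W. card (nbhd N E z))"
    unfolding cross_def using fin(2,3) \<open>N \<inter> W = {}\<close> by (rule card_cross_edges)
  moreover have "finite at_u" "finite cross"
    using fin unfolding at_u_def cross_def nbhd_def by auto
  moreover have "(at_u \<union> edges N E \<union> cross) \<inter> edges W E = {}"
    "(at_u \<union> edges N E) \<inter> cross = {}" "at_u \<inter> edges N E = {}"
  proof -
    have "u \<in> e \<and> e \<subseteq> insert u N" if "e \<in> at_u" for e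
      using that unfolding at_u_def by auto
    moreover have "e \<inter> N \<noteq> {} \<and> e \<inter> W \<noteq> {}" if "e \<in> cross" for e
      using that unfolding cross_def nbhd_def by auto
    moreover have "e \<noteq> {}" if "e \<in> edges W E" for e
      using that unfolding edges_def by auto
    ultimately show "(at_u \<union> edges N E \<union> cross) \<inter> edges W E = {}"
      "(at_u \<union> edges N E) \<inter> cross = {}" "at_u \<inter> edges N E = {}"
      using edges_subset_Pow[of N E] edges_subset_Pow[of W E] \<open>u \<notin> N\<close> \<open>u \<notin> W\<close>
        \<open>N \<inter> W = {}\<close> by blast+
  qed
  ultimately have "card (at_u \<union> edges N E \<union> cross \<union> edges W E)
      = card N + card (edges N E) + (\<Sum>z\<in>W. card (nbhd N E z)) + card (edges W E)"
    using finite_edges[OF fin(2), of E] finite_edges[OF fin(3), of E] fin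
    by (simp add: card_Un_disjoint)
  moreover have "at_u \<union> edges N E \<union> cross \<union> edges W E \<subseteq> edges V E"
    using edges_mono[OF \<open>N \<subseteq> V\<close>] edges_mono[OF \<open>W \<subseteq> V\<close>] assms(1) sym
    unfolding at_u_def cross_def N_def nbhd_def by (auto intro: edge_in_edges)
  ultimately show ?thesis
    using card_mono[OF finite_edges[OF fin(1)]] by metis
qed

lemma induced_star_centre:
  assumes "induced_star E S t"
  obtains c where "c \<in> S" and "card S = t + 1"
    and "\<And>w. w \<in> S \<Longrightarrow> w \<noteq> c \<Longrightarrow> E c w"
    and "\<And>v w. v \<in> S \<Longrightarrow> w \<in> S \<Longrightarrow> E v w \<Longrightarrow> v = c \<or> w = c"
proof -
  obtain f where f: "bij_betw f {0..t} S"
    and fE: "\<forall>i\<in>{0..t}. \<forall>j\<in>{0..t}. E (f i) (f j) \<longleftrightarrow> (i = 0 \<and> j \<noteq> 0) \<or> (j = 0 \<and> i \<noteq> 0)"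
    using assms unfolding induced_star_def by blast
  have S: "S = f ` {0..t}" using f by (simp add: bij_betw_def)
  show thesis
  proof (rule that[of "f 0"])
    show "f 0 \<in> S" using S by auto
    show "card S = t + 1" using bij_betw_same_card[OF f] by simp
  next
    fix w assume w: "w \<in> S" "w \<noteq> f 0"
    then obtain j where "j \<in> {0..t}" "w = f j" using S by auto
    moreover have "j \<noteq> 0"
    proof
      assume "j = 0"
      with w(2) \<open>w = f j\<close> show False by simp
    qed
    ultimately show "E (f 0) w" using fE by auto
  next
    fix v w assume vw: "v \<in> S" "w \<in> S" "E v w"
    then obtain i j where "i \<in> {0..t}" "j \<in> {0..t}" "v = f i" "w = f j" using S by auto
    then show "v = f 0 \<or> w = f 0" using fE vw(3) by auto
  qed
qed

lemma card_edges_star: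
  assumes "finite S" and "c \<in> S" and irrefl: "\<And>a. \<not> E a a"
    and leaves: "\<And>w. w \<in> S \<Longrightarrow> w \<noteq> c \<Longrightarrow> E c w"
    and centre: "\<And>v w. v \<in> S \<Longrightarrow> w \<in> S \<Longrightarrow> E v w \<Longrightarrow> v = c \<or> w = c"
  shows "card (edges S E) = card S - 1"
proof -
  have "edges S E = (\<lambda>w. {c, w}) ` (S - {c})"
  proof (intro equalityI subsetI)
    fix e assume "e \<in> edges S E"
    then obtain v w where e: "e = {v, w}" and vw: "v \<in> S" "w \<in> S" "E v w"
      unfolding edges_def by blast
    have "v \<noteq> w" using vw(3) irrefl by auto
    from centre[OF vw] consider "v = c" | "w = c" by blast
    then show "e \<in> (\<lambda>w. {c, w}) ` (S - {c})"
    proof cases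
      case 1
      then show ?thesis using e vw \<open>v \<noteq> w\<close> by (intro image_eqI[of _ _ w]) auto
    next
      case 2
      then show ?thesis using e vw \<open>v \<noteq> w\<close> by (intro image_eqI[of _ _ v]) auto
    qed
  next
    fix e assume "e \<in> (\<lambda>w. {c, w}) ` (S - {c})"
    then show "e \<in> edges S E" using leaves \<open>c \<in> S\<close> unfolding edges_def by blast
  qed
  moreover have "inj_on (\<lambda>w. {c, w}) (S - {c})"
    by (auto simp: inj_on_def doubleton_eq_iff)
  ultimately show ?thesis using assms(1,2) by (simp add: card_image)
qed

lemma edges_A_plus:
  assumes sym: "\<And>a b. E a b \<Longrightarrow> E b a"
  shows "edges N E = edges {v\<in>N. \<exists>w\<in>N. E v w} E"
  unfolding edges_def using sym by blast

lemma A_plus_star_structure: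
  assumes sym: "\<And>a b. E a b \<Longrightarrow> E b a" and irrefl: "\<And>a. \<not> E a a" and "finite N"
    and star: "induced_star E {v\<in>N. \<exists>w\<in>N. E v w} t" and "1 \<le> t"
  obtains c l where "c \<in> N" and "l \<in> N" and "E c l"
    and "card (nbhd N E c) \<le> t" and "\<And>z. z \<in> N \<Longrightarrow> z \<noteq> c \<Longrightarrow> card (nbhd N E z) \<le> 1"
    and "card (edges N E) = t"
proof -
  define A where "A = {v\<in>N. \<exists>w\<in>N. E v w}"
  obtain c where c: "c \<in> A" and card_A: "card A = t + 1"
    and leaves: "\<And>w. w \<in> A \<Longrightarrow> w \<noteq> c \<Longrightarrow> E c w"
    and centre: "\<And>v w. v \<in> A \<Longrightarrow> w \<in> A \<Longrightarrow> E v w \<Longrightarrow> v = c \<or> w = c"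
    using induced_star_centre star unfolding A_def[symmetric] by blast
  have "finite A" using \<open>finite N\<close> by (simp add: A_def)
  have nbhd_A: "nbhd N E z \<subseteq> A" if "z \<in> N" for z
    using sym that unfolding nbhd_def A_def by blast
  have card_leaves: "card (A - {c}) = t" using card_A c \<open>finite A\<close> by simp
  then have "A - {c} \<noteq> {}" using \<open>1 \<le> t\<close> by (metis card.empty not_one_le_zero)
  then obtain l where l: "l \<in> A" "l \<noteq> c" by blast
  have "card (nbhd N E c) \<le> card (A - {c})"
    using nbhd_A[of c] c irrefl \<open>finite A\<close> by (intro card_mono) (auto simp: nbhd_def A_def)
  then have deg_c: "card (nbhd N E c) \<le> t" using card_leaves by simp
  have deg_other: "card (nbhd N E z) \<le> 1" if z: "z \<in> N" "z \<noteq> c" for z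
  proof -
    have "nbhd N E z \<subseteq> {c}"
    proof
      fix w assume w: "w \<in> nbhd N E z"
      then have "z \<in> A" "w \<in> A" "E z w" using z nbhd_A[OF z(1)] unfolding nbhd_def A_def by auto
      then show "w \<in> {c}" using centre z(2) by blast
    qed
    then show ?thesis using card_mono[of "{c}"] by fastforce
  qed
  have "edges N E = edges A E"
    unfolding A_def by (rule edges_A_plus) (rule sym)
  then have "card (edges N E) = t"
    using card_edges_star[of A c E, OF \<open>finite A\<close> c irrefl leaves centre] card_A by simp
  with c l leaves deg_c deg_other show thesis
    by (intro that[of c l]) (auto simp: A_def)
qed

text \<open>Two common neighbours b, d of u and y outside the triangle u c l would close the
  4-cycle u b y d of a copy of H(4,3).\<close>
lemma H43_free_card_common_nbhd_le:
  assumes "graph V E" and "H43_free V E"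
    and "E u c" and "E u l" and "E c l" and "y \<noteq> u" and "y \<noteq> c" and "y \<noteq> l"
  shows "card (nbhd (nbhd V E u) E y) \<le> 3"
proof -
  define S where "S = nbhd (nbhd V E u) E y"
  have inV: "\<And>a b. E a b \<Longrightarrow> a \<in> V \<and> b \<in> V" and sym: "\<And>a b. E a b \<Longrightarrow> E b a"
    and irrefl: "\<And>a. \<not> E a a" and "finite S"
    using assms(1) unfolding graph_def S_def nbhd_def by auto
  have "card (S - {c, l}) \<le> Suc 0"
  proof (subst card_le_Suc0_iff_eq)
    show "finite (S - {c, l})" using \<open>finite S\<close> by simp
    show "\<forall>b\<in>S - {c, l}. \<forall>d\<in>S - {c, l}. b = d"
    proof (intro ballI, rule ccontr)
      fix b d assume b: "b \<in> S - {c, l}" and d: "d \<in> S - {c, l}" and "b \<noteq> d"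
      then have "E u b" "E y b" "E u d" "E y d" unfolding S_def nbhd_def by auto
      have "distinct [u, b, y, d, c, l]"
        using b d \<open>b \<noteq> d\<close> \<open>E u b\<close> \<open>E y b\<close> \<open>E u d\<close> \<open>E y d\<close> assms(3-8) irrefl by auto
      moreover have "{u, b, y, d, c, l} \<subseteq> V"
        using inV \<open>E u b\<close> \<open>E y d\<close> assms(3,5) by auto
      moreover have "E u b \<and> E b y \<and> E y d \<and> E d u \<and> E u c \<and> E c l \<and> E l u"
        using \<open>E u b\<close> \<open>E y b\<close> \<open>E y d\<close> \<open>E u d\<close> assms(3-5) sym by blast
      ultimately have copy: "distinct [u, b, y, d, c, l] \<and> {u, b, y, d, c, l} \<subseteq> V \<and>
          E u b \<and> E b y \<and> E y d \<and> E d u \<and> E u c \<and> E c l \<and> E l u"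
        by (simp only:)
      have "\<exists>a b c d e f. distinct [a, b, c, d, e, f] \<and> {a, b, c, d, e, f} \<subseteq> V \<and>
          E a b \<and> E b c \<and> E c d \<and> E d a \<and> E a e \<and> E e f \<and> E f a"
        by (intro exI) (fact copy)
      then show False using assms(2) unfolding H43_free_def by simp
    qed
  qed
  moreover have "card S - card {c, l} \<le> card (S - {c, l})"
    by (rule diff_card_le_card_Diff) simp
  moreover have "card {c, l} \<le> 2" by (simp add: card_insert_if)
  ultimately show ?thesis unfolding S_def by linarith
qed

lemma sum_star_degrees_le:
  fixes x :: "'a \<Rightarrow> real" and d :: "'a \<Rightarrow> nat"
  assumes "finite N" and "c \<in> N" and "d c \<le> t" and "1 \<le> t"
    and "\<And>z. z \<in> N \<Longrightarrow> z \<noteq> c \<Longrightarrow> d z \<le> 1"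
    and "\<And>z. z \<in> N \<Longrightarrow> 0 \<le> x z \<and> x z \<le> M"
  shows "(\<Sum>z\<in>N. real (d z) * x z) \<le> (\<Sum>z\<in>N. x z) + (real t - 1) * M"
proof -
  have "(\<Sum>z\<in>N. real (d z) * x z) - (\<Sum>z\<in>N. x z) = (\<Sum>z\<in>N. (real (d z) - 1) * x z)"
    by (simp add: sum_subtractf algebra_simps)
  also have "\<dots> \<le> (\<Sum>z\<in>N. if z = c then (real t - 1) * M else 0)"
  proof (rule sum_mono)
    fix z assume z: "z \<in> N"
    show "(real (d z) - 1) * x z \<le> (if z = c then (real t - 1) * M else 0)"
    proof (cases "z = c")
      case True
      have "(real (d z) - 1) * x z \<le> (real t - 1) * x z"
        using assms(3,6) z True by (intro mult_right_mono) auto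
      also have "\<dots> \<le> (real t - 1) * M"
        using assms(4,6) z by (intro mult_left_mono) auto
      finally show ?thesis using True by simp
    next
      case False
      then show ?thesis using assms(5,6) z by (simp add: mult_nonpos_nonneg)
    qed
  qed
  also have "\<dots> = (real t - 1) * M" using assms(1,2) by simp
  finally show ?thesis by simp
qed

lemma sum_degrees_le_remove:
  fixes x :: "'a \<Rightarrow> real" and d :: "'a \<Rightarrow> nat"
  assumes "finite W" and "y \<in> W" and "\<And>z. z \<in> W \<Longrightarrow> x z \<le> M"
  shows "(\<Sum>z\<in>W. real (d z) * x z) \<le> real (\<Sum>z\<in>W. d z) * M - real (d y) * (M - x y)"
proof -
  have "(\<Sum>z\<in>W. real (d z) * x z) = real (d y) * x y + (\<Sum>z\<in>W - {y}. real (d z) * x z)"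
    by (rule sum.remove[OF assms(1,2)])
  also have "\<dots> \<le> real (d y) * x y + (\<Sum>z\<in>W - {y}. real (d z) * M)"
    using assms(3) by (intro add_left_mono sum_mono mult_left_mono) auto
  also have "(\<Sum>z\<in>W - {y}. real (d z) * M) = real (\<Sum>z\<in>W - {y}. d z) * M"
    by (simp add: sum_distrib_right)
  also have "real (\<Sum>z\<in>W - {y}. d z) = real (\<Sum>z\<in>W. d z) - real (d y)"
    using sum.remove[OF assms(1,2), of d] by simp
  finally show ?thesis by (simp add: algebra_simps)
qed

lemma eigenvector_bound_star_nbhd:
  assumes "graph V E" and "u \<in> V"
    and eig: "\<And>v. v \<in> V \<Longrightarrow> (\<Sum>w\<in>nbhd V E v. x w) = r * x v"
    and pos: "\<And>v. v \<in> V \<Longrightarrow> 0 < x v" and max: "\<And>v. v \<in> V \<Longrightarrow> x v \<le> x u"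
  defines "N \<equiv> nbhd V E u" and "W \<equiv> V - insert u (nbhd V E u)"
  assumes "1 \<le> t" and "c \<in> N" and "card (nbhd N E c) \<le> t"
    and "\<And>z. z \<in> N \<Longrightarrow> z \<noteq> c \<Longrightarrow> card (nbhd N E z) \<le> 1" and "y \<in> W"
  shows "r * r * x u \<le> (real (card N) + real t - 1 + real (\<Sum>z\<in>W. card (nbhd N E z)) + r) * x u
           - real (card (nbhd N E y)) * (x u - x y)"
proof -
  have fin: "finite N" "finite W" and "N \<subseteq> V" "W \<subseteq> V"
    using assms(1) unfolding graph_def N_def W_def nbhd_def by auto
  have "(\<Sum>z\<in>N. real (card (nbhd N E z)) * x z) \<le> (\<Sum>z\<in>N. x z) + (real t - 1) * x u"
    using fin(1) assms(8-11) pos max \<open>N \<subseteq> V\<close>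
    by (intro sum_star_degrees_le[of N c]) (auto simp: less_imp_le subsetD)
  moreover have "(\<Sum>z\<in>N. x z) = r * x u" using eig[OF assms(2)] by (simp add: N_def)
  moreover have "(\<Sum>z\<in>W. real (card (nbhd N E z)) * x z)
      \<le> real (\<Sum>z\<in>W. card (nbhd N E z)) * x u - real (card (nbhd N E y)) * (x u - x y)"
    using fin(2) assms(12) max \<open>W \<subseteq> V\<close> by (intro sum_degrees_le_remove) auto
  moreover have "(real (card N) + real t - 1 + real (\<Sum>z\<in>W. card (nbhd N E z)) + r) * x u
      = real (card N) * x u + (real t - 1) * x u + real (\<Sum>z\<in>W. card (nbhd N E z)) * x u + r * x u"
    by (simp add: algebra_simps)
  ultimately show ?thesis
    using eigenvector_two_step_identity[OF assms(1,2) eig] unfolding N_def W_def by linarith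
qed

section \<open>Vertices at distance two\<close>

text \<open>Multiplying the first inequality by r and inserting the second gives
  r (k - 3/4) \<le> k^2, which fails for r \<ge> 6 and 1 \<le> k \<le> 3.\<close>
lemma spectral_bound_contradiction:
  fixes r m k a b :: real
  assumes "6 \<le> r" and "m - 7/4 \<le> r\<^sup>2 - r" and "1 \<le> k" and "k \<le> 3" and "0 < a"
    and "r * r * a \<le> (m - 1 - k + r) * a + k * b" and "r * b \<le> k * a"
  shows False
proof -
  have "r * (r * r * a) \<le> r * ((m - 1 - k + r) * a + k * b)"
    using assms(1,6) by (intro mult_left_mono) auto
  also have "\<dots> = ((m - 1 - k + r) * r) * a + k * (r * b)"
    by (simp add: algebra_simps)
  also have "\<dots> \<le> ((m - 1 - k + r) * r) * a + k * (k * a)"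
    using assms(3,7) by (intro add_left_mono mult_left_mono) auto
  finally have "(r * (r * r)) * a \<le> ((m - 1 - k + r) * r + k * k) * a"
    by (simp add: algebra_simps)
  then have cubic: "r * (r * r) \<le> (m - 1 - k + r) * r + k * k"
    using assms(5) by simp
  have "r * (r + m - 7/4) \<le> r * (r * r)"
    using assms(1,2) by (intro mult_left_mono) (auto simp: power2_eq_square)
  with cubic have "r * (k - 3/4) \<le> k * k"
    by (simp add: algebra_simps)
  moreover have "6 * (k - 3/4) \<le> r * (k - 3/4)"
    using assms(1,3) by (intro mult_right_mono) auto
  moreover have "(k - 1) * (k - 3) \<le> 0"
    using assms(3,4) by (intro mult_nonneg_nonpos) auto
  ultimately show False
    using assms(3) by (simp add: algebra_simps)
qed

lemma outer_vertex_nbhd_bounds: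
  assumes "graph V E" and "H43_free V E" and "no_isolated V E" and "u \<in> V"
    and eig: "\<And>v. v \<in> V \<Longrightarrow> (\<Sum>w\<in>nbhd V E v. x w) = r * x v"
    and max: "\<And>v. v \<in> V \<Longrightarrow> x v \<le> x u"
  defines "N \<equiv> nbhd V E u" and "W \<equiv> V - insert u (nbhd V E u)"
  assumes "c \<in> N" and "l \<in> N" and "E c l" and "y \<in> W" and "\<not> (\<exists>w\<in>W. E y w)"
  shows "r * x y \<le> real (card (nbhd N E y)) * x u"
    and "1 \<le> card (nbhd N E y)" and "card (nbhd N E y) \<le> 3"
proof -
  have sym: "\<And>a b. E a b \<Longrightarrow> E b a" and "finite N" "y \<in> V" "N \<subseteq> V"
    using assms(1) \<open>y \<in> W\<close> unfolding graph_def N_def W_def nbhd_def by auto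
  have nbhd_y: "nbhd V E y = nbhd N E y"
    using assms(13) \<open>y \<in> W\<close> sym unfolding N_def W_def nbhd_def by auto
  have "r * x y = (\<Sum>w\<in>nbhd N E y. x w)" using eig[OF \<open>y \<in> V\<close>] nbhd_y by simp
  also have "\<dots> \<le> real (card (nbhd N E y)) * x u"
    using max \<open>N \<subseteq> V\<close> by (intro sum_bounded_above) (auto simp: nbhd_def)
  finally show "r * x y \<le> real (card (nbhd N E y)) * x u" .
  obtain w where "w \<in> V" "E y w" using assms(3) \<open>y \<in> V\<close> unfolding no_isolated_def by blast
  then have "nbhd N E y \<noteq> {}" using nbhd_y by (auto simp: nbhd_def)
  then show "1 \<le> card (nbhd N E y)"
    using \<open>finite N\<close> by (simp add: Suc_le_eq card_gt_0_iff nbhd_def)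
  show "card (nbhd N E y) \<le> 3"
    unfolding N_def using assms(9-12) assms(1,2)
    by (intro H43_free_card_common_nbhd_le) (auto simp: N_def W_def nbhd_def)
qed

lemma star_nbhd_spectral_inequality:
  assumes "graph V E" and "card (edges V E) = m" and "u \<in> V"
    and eig: "\<And>v. v \<in> V \<Longrightarrow> (\<Sum>w\<in>nbhd V E v. x w) = r * x v"
    and pos: "\<And>v. v \<in> V \<Longrightarrow> 0 < x v" and max: "\<And>v. v \<in> V \<Longrightarrow> x v \<le> x u"
  defines "N \<equiv> nbhd V E u" and "W \<equiv> V - insert u (nbhd V E u)"
  assumes "1 \<le> t" and c: "c \<in> N" "card (nbhd N E c) \<le> t"
    "\<And>z. z \<in> N \<Longrightarrow> z \<noteq> c \<Longrightarrow> card (nbhd N E z) \<le> 1" and "card (edges N E) = t"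
    and "y \<in> W"
  shows "r * r * x u \<le> (real m - 1 - real (card (edges W E)) + r) * x u
           - real (card (nbhd N E y)) * (x u - x y)"
proof -
  define D where "D = (\<Sum>z\<in>W. card (nbhd N E z))"
  have "r * r * x u \<le> (real (card N) + real t - 1 + real D + r) * x u
      - real (card (nbhd N E y)) * (x u - x y)"
    unfolding D_def N_def W_def
    by (rule eigenvector_bound_star_nbhd[OF assms(1,3) eig pos max \<open>1 \<le> t\<close>
          c[unfolded N_def] \<open>y \<in> W\<close>[unfolded W_def N_def]])
  moreover have "card N + t + D + card (edges W E) \<le> m"
    using card_edges_local_lower_bound[OF assms(1,3)] \<open>card (edges N E) = t\<close> assms(2)
    unfolding D_def N_def W_def by simp
  then have "real (card N) + real t + real D \<le> real m - real (card (edges W E))"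
    by linarith
  then have "(real (card N) + real t - 1 + real D + r) * x u
      \<le> (real m - 1 - real (card (edges W E)) + r) * x u"
    using pos[OF assms(3)] by (intro mult_right_mono) auto
  ultimately show ?thesis by linarith
qed

lemma outer_vertex_contradiction:
  assumes "graph V E" and "H43_free V E" and "no_isolated V E" and "card (edges V E) = m"
    and "u \<in> V" and eig: "\<And>v. v \<in> V \<Longrightarrow> (\<Sum>w\<in>nbhd V E v. x w) = r * x v"
    and pos: "\<And>v. v \<in> V \<Longrightarrow> 0 < x v" and max: "\<And>v. v \<in> V \<Longrightarrow> x v \<le> x u"
    and r: "real m - 7/4 \<le> r\<^sup>2 - r" "6 \<le> r"
  defines "N \<equiv> nbhd V E u" and "W \<equiv> V - insert u (nbhd V E u)"
  assumes "1 \<le> t" and c: "c \<in> N" "l \<in> N" "E c l" "card (nbhd N E c) \<le> t"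
    "\<And>z. z \<in> N \<Longrightarrow> z \<noteq> c \<Longrightarrow> card (nbhd N E z) \<le> 1" and "card (edges N E) = t"
    and "y \<in> W"
  shows False
proof -
  define k where "k = card (nbhd N E y)"
  have key: "r * r * x u \<le> (real m - 1 - real (card (edges W E)) + r) * x u - real k * (x u - x y)"
    unfolding k_def N_def W_def
    by (rule star_nbhd_spectral_inequality[OF assms(1,4,5) eig pos max \<open>1 \<le> t\<close>
          c(1,4,5)[unfolded N_def] \<open>card (edges N E) = t\<close>[unfolded N_def]
          \<open>y \<in> W\<close>[unfolded W_def N_def]])
  have "y \<in> V" "0 < x u" using \<open>y \<in> W\<close> pos assms(5) unfolding W_def by auto
  show False
  proof (cases "\<exists>w\<in>W. E y w")
    case True
    then have "edges W E \<noteq> {}" using \<open>y \<in> W\<close> unfolding edges_def by blast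
    moreover have "finite (edges W E)"
      using assms(1) unfolding graph_def W_def by (intro finite_edges) auto
    ultimately have "(real m - 1 - real (card (edges W E)) + r) * x u \<le> (real m - 2 + r) * x u"
      using \<open>0 < x u\<close> card_gt_0_iff[of "edges W E"] by (intro mult_right_mono) auto
    moreover have "0 \<le> real k * (x u - x y)" using max \<open>y \<in> V\<close> by simp
    ultimately have "r * r * x u \<le> (real m - 2 + r) * x u" using key by linarith
    then have "r * r \<le> real m - 2 + r" using \<open>0 < x u\<close> by simp
    then show False using r by (simp add: power2_eq_square)
  next
    case False
    note bounds = outer_vertex_nbhd_bounds[OF assms(1-3,5) eig max c(1-3)[unfolded N_def]
        \<open>y \<in> W\<close>[unfolded W_def N_def] False[unfolded W_def N_def]]
    have y_bound: "r * x y \<le> real k * x u" and k: "1 \<le> real k" "real k \<le> 3"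
      using bounds by (simp_all add: k_def N_def)
    have "(real m - 1 - real (card (edges W E)) + r) * x u \<le> (real m - 1 + r) * x u"
      using \<open>0 < x u\<close> by (intro mult_right_mono) auto
    with key have "r * r * x u \<le> (real m - 1 - real k + r) * x u + real k * x y"
      by (simp add: algebra_simps)
    then show False
      by (rule spectral_bound_contradiction[OF r(2,1) k \<open>0 < x u\<close> _ y_bound])
  qed
qed

theorem claim5:
  fixes m :: nat and V :: "'a set" and E :: "'a \<Rightarrow> 'a \<Rightarrow> bool"
    and x :: "'a \<Rightarrow> real" and u :: 'a and t :: nat
  assumes "even m" and "m \<ge> 38"
    and "extremal m V E"
    and "perron_vector V E x"
    and "u \<in> V" and "\<forall>v\<in>V. x v \<le> x u"
    and "t \<ge> 1"
    and "induced_star E {v\<in>nbhd V E u. \<exists>w\<in>nbhd V E u. E v w} t"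
  shows "V - insert u (nbhd V E u) = {}"
proof (rule ccontr)
  define N where "N = nbhd V E u"
  assume "V - insert u (nbhd V E u) \<noteq> {}"
  then obtain y where y: "y \<in> V - insert u (nbhd V E u)" by blast
  have G: "graph V E" and adm: "H43_free V E" "no_isolated V E" "card (edges V E) = m"
    using assms(3) unfolding extremal_def admissible_def by auto
  then have sym: "\<And>a b. E a b \<Longrightarrow> E b a" and irrefl: "\<And>a. \<not> E a a" and "finite N"
    unfolding graph_def N_def nbhd_def by auto
  have perron: "\<And>v. v \<in> V \<Longrightarrow> (\<Sum>w\<in>nbhd V E v. x w) = spectral_radius V E * x v"
    "\<And>v. v \<in> V \<Longrightarrow> 0 < x v"
    using assms(4) unfolding perron_vector_def nbhd_def by auto
  show False
  proof (rule A_plus_star_structure[of E N t, OF sym irrefl \<open>finite N\<close> assms(8)[folded N_def] assms(7)])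
    fix c l assume "c \<in> N" "l \<in> N" "E c l" "card (nbhd N E c) \<le> t"
      "\<And>z. z \<in> N \<Longrightarrow> z \<noteq> c \<Longrightarrow> card (nbhd N E z) \<le> 1" "card (edges N E) = t"
    note star = this[unfolded N_def]
    show False
      by (rule outer_vertex_contradiction[OF G adm assms(5) perron assms(6)[rule_format]
            extremal_spectral_radius_lower_bound[OF assms(3,1,2)] assms(7) star y])
  qed
qed

end
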